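(* Let $\mu$ be a probability measure on $[0,1]$ and let $K$ be the probability measure on $\mathbf{N}\cup\{\infty\}$ defined by $$K(n)=\int_0^1(1-x)^{n-1}x\,\mathrm{d}\mu(x)\quad(n\ge 1),\qquad K(\{\infty\})=\mu(\{0\}).$$ Let $\tau$ be the renewal process with inter-arrival law $K$ and law $\mathbf{P}$. Then there exists a probability measure $\nu$ on $[0,1]$ such that $$s_\nu(z)\,s_\mu(1-z)=\frac{1}{z(1-z)}\qquad\text{for all } z\in\mathbf{C}_+,$$ and for all integers $N\ge 0$, $$\mathbf{P}(N\in\tau)=\int_0^1 x^N\,\mathrm{d}\nu(x).$$
   Context: Renewal process: given a probability measure $K$ on $\mathbf{N}\cup\{\infty\}=\{1,2,\dots\}\cup\{\infty\}$, let $(\eta_n)_{n\ge1}$ be i.i.d. with law $K$, $\tau_0=0$, $\tau_n=\eta_1+\dots+\eta_n$, and $\tau=\{\tau_i : i\ge 0\}$ (a random subset of $\mathbf{N}\cup\{0\}$); $\mathbf{P}$ denotes its law. $\mathbf{C}_+=\{z\in\mathbf{C}:\Im z>0\}$. For a positive measure $\mu$ on $\mathbf{R}$, its Stieltjes transform is $s_\mu(z)=\int_{\mathbf{R}}\frac{\mathrm{d}\mu(x)}{x-z}$, defined for $z\in\mathbf{C}_+$ (and analytically for $z$ off the support of $\mu$). *)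

theory Defs
  imports "HOL-Probability.Probability"
begin

definition stieltjes :: "real measure \<Rightarrow> complex \<Rightarrow> complex" where
  "stieltjes M z = integral\<^sup>L M (\<lambda>x. 1 / (complex_of_real x - z))"

text \<open>Renewal process: i.i.d. inter-arrival times with law K on N \<union> {\<infinity>}
  (modelled as enat), tau = {eta_1 + ... + eta_n : n \<ge> 0}.\<close>
definition renewal_seq_law :: "enat pmf \<Rightarrow> (nat \<Rightarrow> enat) measure" where
  "renewal_seq_law K = PiM UNIV (\<lambda>_. measure_pmf K)"

definition renewal_set :: "(nat \<Rightarrow> enat) \<Rightarrow> nat set" where
  "renewal_set \<eta> = {N. \<exists>n. (\<Sum>i<n. \<eta> i) = enat N}"

definition renewal_prob :: "enat pmf \<Rightarrow> nat \<Rightarrow> real" where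
  "renewal_prob K N = measure (renewal_seq_law K) {\<eta> \<in> space (renewal_seq_law K). N \<in> renewal_set \<eta>}"

end

theory Submission
  imports
    Defs
    "HOL-Computational_Algebra.Polynomial"
    "HOL-Real_Asymp.Real_Asymp"
    "HOL-Complex_Analysis.Complex_Analysis"
begin

text \<open>
  Write \<open>u N = P(N \<in> \<tau>)\<close>. On pairs \<open>(a, p)\<close> of a number and a polynomial consider the form
  \<open>\<langle>(a, p), (b, q)\<rangle> = a b + \<integral>x (1 - x) p q d\<mu>\<close> and the operator
  \<open>T (a, p) = (\<integral>x (a + (1 - x) p) d\<mu>, a + (1 - x) p)\<close>. The renewal equation
  \<open>u (N + 1) = \<Sum>\<^sub>k K k u (N + 1 - k)\<close> is solved by \<open>u N = \<langle>T\<^sup>N e, e\<rangle>\<close> with \<open>e = (1, 0)\<close>.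
  For this positive semidefinite form \<open>T\<close> is symmetric with \<open>0 \<le> T \<le> 1\<close>, so every
  \<open>\<langle>T\<^sup>i (1 - T)\<^sup>j e, e\<rangle>\<close>, i.e. every iterated difference of \<open>u\<close>, is nonnegative, and by
  Hausdorff's moment theorem (Bernstein approximation plus Helly selection) \<open>u\<close> is the
  moment sequence of a probability measure \<open>\<nu>\<close> on \<open>[0, 1]\<close>. For \<open>|z| > 1\<close> the Stieltjes
  transforms expand as \<open>s\<^sub>\<nu>(z) = -U(1/z)/z\<close> and \<open>(z - 1) s\<^sub>\<mu>(1 - z) = 1 - F(1/z)\<close>, with
  \<open>U\<close> and \<open>F\<close> the generating functions of \<open>u\<close> and \<open>K\<close>; the renewal equation in the form
  \<open>U (1 - F) = 1\<close> gives the identity there, and analytic continuation extends it to the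
  upper half-plane.
\<close>

section \<open>Iterated differences and Hausdorff's moment problem\<close>

fun iter_diff :: "nat \<Rightarrow> (nat \<Rightarrow> real) \<Rightarrow> nat \<Rightarrow> real" where
  "iter_diff 0 u N = u N"
| "iter_diff (Suc n) u N = iter_diff n u N - iter_diff n u (Suc N)"

lemma iter_diff_binomial:
  "iter_diff a u b = (\<Sum>j\<le>m. of_nat (m choose j) * iter_diff (a + m - j) u (b + j))"
proof (induction m)
  case 0
  then show ?case by simp
next
  case (Suc m)
  let ?d = "\<lambda>i k. iter_diff i u k"
  define S1 where "S1 = (\<Sum>j\<le>m. of_nat (m choose j) * ?d (a + Suc m - j) (b + j))"
  define S2 where "S2 = (\<Sum>j\<le>m. of_nat (m choose j) * ?d (a + m - j) (b + Suc j))"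
  have "?d a b = (\<Sum>j\<le>m. of_nat (m choose j) * (?d (a + Suc m - j) (b + j) + ?d (a + m - j) (b + Suc j)))"
    unfolding Suc.IH by (intro sum.cong) (auto simp: Suc_diff_le)
  also have "\<dots> = S1 + S2"
    by (simp add: S1_def S2_def distrib_left sum.distrib)
  also have "S1 = (\<Sum>j\<le>Suc m. of_nat (m choose j) * ?d (a + Suc m - j) (b + j))"
    by (simp add: S1_def)
  also have "\<dots> = ?d (a + Suc m) b + (\<Sum>j\<le>m. of_nat (m choose Suc j) * ?d (a + m - j) (b + Suc j))"
    by (subst sum.atMost_Suc_shift) simp
  also have "\<dots> + S2 = (\<Sum>j\<le>Suc m. of_nat (Suc m choose j) * ?d (a + Suc m - j) (b + j))"
    by (subst sum.atMost_Suc_shift) (simp add: S2_def algebra_simps sum.distrib)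
  finally show ?case .
qed

definition falling_fact :: "nat \<Rightarrow> nat \<Rightarrow> real" where
  "falling_fact k N = (\<Prod>i<N. real k - real i)"

lemma falling_fact_eq_0: "k < N \<Longrightarrow> falling_fact k N = 0"
  by (auto simp: falling_fact_def prod_zero_iff intro!: bexI[of _ k])

lemma falling_fact_pos: "N \<le> n \<Longrightarrow> falling_fact n N > 0"
  unfolding falling_fact_def by (rule prod_pos) auto

lemma falling_fact_eq_fact: "N \<le> k \<Longrightarrow> falling_fact k N = fact k / fact (k - N)"
proof (induction N)
  case 0
  then show ?case by (simp add: falling_fact_def)
next
  case (Suc N)
  then have "k - N = Suc (k - Suc N)"
    by simp
  with Suc show ?case
    by (simp add: falling_fact_def of_nat_diff field_simps)
qed

lemma binomial_mult_falling_fact: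
  assumes "N \<le> k" "k \<le> n"
  shows "real (n choose k) * falling_fact k N = falling_fact n N * real ((n - N) choose (k - N))"
proof -
  have "n - N - (k - N) = n - k" using assms by auto
  with assms show ?thesis
    by (simp add: falling_fact_eq_fact binomial_fact field_simps)
qed

lemma falling_fact_ratio:
  assumes "k \<le> n" "N \<le> n" "n > 0"
  shows "falling_fact k N / falling_fact n N
    = (\<Prod>i<N. (real k / real n - real i / real n) / (1 - real i / real n))"
proof -
  have "(real k / real n - real i / real n) / (1 - real i / real n) = (real k - real i) / (real n - real i)"
    if "i < N" for i
    using assms that by (simp add: field_simps)
  then show ?thesis
    by (simp add: falling_fact_def prod_dividef)
qed

text \<open>The \<open>k\<close>-th Bernstein weight of \<open>u\<close> at level \<open>n\<close>: for a moment sequence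
  \<open>u N = \<integral>x^N d\<nu>\<close> it is \<open>\<integral>(n choose k) x^k (1 - x)^(n - k) d\<nu>\<close>.\<close>
definition bernstein_weight :: "(nat \<Rightarrow> real) \<Rightarrow> nat \<Rightarrow> nat \<Rightarrow> real" where
  "bernstein_weight u n k = real (n choose k) * iter_diff (n - k) u k"

lemma sum_bernstein_weight_falling_fact:
  assumes "N \<le> n"
  shows "(\<Sum>k\<le>n. bernstein_weight u n k * falling_fact k N) = falling_fact n N * u N"
proof -
  have "(\<Sum>k\<le>n. bernstein_weight u n k * falling_fact k N)
      = (\<Sum>k\<in>{N..n}. bernstein_weight u n k * falling_fact k N)"
    by (rule sum.mono_neutral_right) (auto simp: falling_fact_eq_0)
  also have "\<dots> = falling_fact n N * (\<Sum>k\<in>{N..n}. real ((n - N) choose (k - N)) * iter_diff (n - k) u k)"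
    unfolding sum_distrib_left
  proof (rule sum.cong)
    fix k assume "k \<in> {N..n}"
    then have "real (n choose k) * falling_fact k N = falling_fact n N * real ((n - N) choose (k - N))"
      by (intro binomial_mult_falling_fact) auto
    then show "bernstein_weight u n k * falling_fact k N
        = falling_fact n N * (real ((n - N) choose (k - N)) * iter_diff (n - k) u k)"
      unfolding bernstein_weight_def by (metis mult.assoc mult.commute)
  qed simp
  also have "(\<Sum>k\<in>{N..n}. real ((n - N) choose (k - N)) * iter_diff (n - k) u k)
      = (\<Sum>j\<le>n - N. real ((n - N) choose j) * iter_diff (0 + (n - N) - j) u (N + j))"
    using assms
    by (intro sum.reindex_bij_witness[of _ "\<lambda>j. j + N" "\<lambda>k. k - N"]) auto
  also have "\<dots> = u N"
    using iter_diff_binomial[of 0 u N "n - N"] by simp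
  finally show ?thesis .
qed

lemma sum_bernstein_weight: "(\<Sum>k\<le>n. bernstein_weight u n k) = u 0"
  using sum_bernstein_weight_falling_fact[of 0 n u] by (simp add: falling_fact_def)

lemma power_approx_by_falling_fact_ratio:
  assumes "2 * N \<le> n" "0 \<le> x" "x \<le> 1"
  shows "\<bar>x ^ N - (\<Prod>i<N. (x - real i / real n) / (1 - real i / real n))\<bar> \<le> 2 * real N ^ 2 / real n"
proof -
  have factor: "\<bar>(x - t) / (1 - t)\<bar> \<le> 1 \<and> \<bar>x - (x - t) / (1 - t)\<bar> \<le> 2 * real N / real n"
    if "i < N" and t: "t = real i / real n" for i t
  proof -
    have n: "real n > 0" using assms that by simp
    have t0: "0 \<le> t" and t1: "t \<le> 1/2" and tN: "t \<le> real N / real n"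
      unfolding t using assms \<open>i < N\<close> n by (auto simp: field_simps)
    have "x - (x - t) / (1 - t) = t * (1 - x) / (1 - t)"
      using t1 by (simp add: field_simps)
    moreover have "0 \<le> t * (1 - x) / (1 - t)"
      using t0 t1 assms by simp
    moreover have "t * (1 - x) \<le> t * (2 * (1 - t))"
      using t0 t1 assms by (intro mult_left_mono) auto
    then have "t * (1 - x) / (1 - t) \<le> 2 * t"
      using t1 by (simp add: divide_le_eq mult_ac)
    ultimately have "\<bar>x - (x - t) / (1 - t)\<bar> \<le> 2 * t"
      by (simp only: abs_of_nonneg)
    moreover have "\<bar>(x - t) / (1 - t)\<bar> \<le> 1"
      using assms t0 t1 by (simp add: abs_le_iff field_simps)
    ultimately show ?thesis
      using tN by linarith
  qed
  have "\<bar>(\<Prod>i<N. x) - (\<Prod>i<N. (x - real i / real n) / (1 - real i / real n))\<bar>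
      \<le> (\<Sum>i<N. \<bar>x - (x - real i / real n) / (1 - real i / real n)\<bar>)"
    using norm_prod_diff[of "{..<N}" "\<lambda>_. x"] factor assms by simp
  also have "\<dots> \<le> (\<Sum>i<N. 2 * real N / real n)"
    by (rule sum_mono) (use factor in auto)
  finally show ?thesis
    by (simp add: power2_eq_square mult_ac)
qed

locale completely_monotone =
  fixes u :: "nat \<Rightarrow> real"
  assumes u_0: "u 0 = 1" and iter_diff_nonneg: "\<And>n N. iter_diff n u N \<ge> 0"
begin

lemma bernstein_weight_nonneg: "bernstein_weight u n k \<ge> 0"
  by (simp add: bernstein_weight_def iter_diff_nonneg)

lemma sum_bernstein_weight_eq_1: "(\<Sum>k\<le>n. bernstein_weight u n k) = 1"
  by (simp add: sum_bernstein_weight u_0)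

definition bernstein_moment :: "nat \<Rightarrow> nat \<Rightarrow> real" where
  "bernstein_moment n N = (\<Sum>k\<le>n. bernstein_weight u n k * (real k / real n) ^ N)"

lemma bernstein_moment_approx:
  assumes "2 * N \<le> n" "n > 0"
  shows "\<bar>bernstein_moment n N - u N\<bar> \<le> 2 * real N ^ 2 / real n"
proof -
  let ?w = "bernstein_weight u n" and ?e = "2 * real N ^ 2 / real n"
  have Nn: "N \<le> n" using assms by simp
  have "u N = (\<Sum>k\<le>n. ?w k * (falling_fact k N / falling_fact n N))"
    using sum_bernstein_weight_falling_fact[OF Nn, of u] falling_fact_pos[OF Nn]
    by (simp add: sum_divide_distrib[symmetric] nonzero_eq_divide_eq)
  then have "\<bar>bernstein_moment n N - u N\<bar>
      = \<bar>\<Sum>k\<le>n. ?w k * ((real k / real n) ^ N - falling_fact k N / falling_fact n N)\<bar>"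
    by (simp add: bernstein_moment_def sum_subtractf algebra_simps)
  also have "\<dots> \<le> (\<Sum>k\<le>n. ?w k * ?e)"
  proof (rule order_trans[OF sum_abs sum_mono])
    fix k assume "k \<in> {..n}"
    then have "\<bar>(real k / real n) ^ N - falling_fact k N / falling_fact n N\<bar> \<le> ?e"
      using assms Nn
      by (subst falling_fact_ratio) (auto intro!: power_approx_by_falling_fact_ratio)
    then show "\<bar>?w k * ((real k / real n) ^ N - falling_fact k N / falling_fact n N)\<bar> \<le> ?w k * ?e"
      using bernstein_weight_nonneg[of n k]
      by (simp add: abs_mult mult_left_mono flip: times_divide_eq_right)
  qed
  also have "\<dots> = ?e"
    by (simp only: sum_distrib_right[symmetric] sum_bernstein_weight_eq_1 mult_1)
  finally show ?thesis .
qed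

lemma bernstein_moment_tendsto: "(\<lambda>n. bernstein_moment n N) \<longlonglongrightarrow> u N"
proof -
  have "(\<lambda>n. 2 * real N ^ 2 / real n) \<longlonglongrightarrow> 0"
    by real_asymp
  moreover have "eventually (\<lambda>n. norm (bernstein_moment n N - u N) \<le> 2 * real N ^ 2 / real n) sequentially"
    using eventually_ge_at_top[of "2 * N + 1"] by eventually_elim (auto intro: bernstein_moment_approx)
  ultimately have "(\<lambda>n. bernstein_moment n N - u N) \<longlonglongrightarrow> 0"
    by (rule Lim_null_comparison[rotated])
  then show ?thesis
    by (simp add: LIM_zero_iff)
qed

definition bernstein_pmf :: "nat \<Rightarrow> nat pmf" where
  "bernstein_pmf n = embed_pmf (\<lambda>k. if k \<le> n then bernstein_weight u n k else 0)"

lemma pmf_bernstein_pmf: "pmf (bernstein_pmf n) k = (if k \<le> n then bernstein_weight u n k else 0)"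
proof -
  have "(\<integral>\<^sup>+k. ennreal (if k \<le> n then bernstein_weight u n k else 0) \<partial>count_space UNIV)
      = (\<Sum>k\<le>n. ennreal (if k \<le> n then bernstein_weight u n k else 0))" (is "?total = _")
    by (rule nn_integral_count_space') auto
  also have "\<dots> = (\<Sum>k\<le>n. ennreal (bernstein_weight u n k))"
    by (intro sum.cong) auto
  also have "\<dots> = 1"
    by (simp add: sum_ennreal bernstein_weight_nonneg sum_bernstein_weight_eq_1)
  finally have "?total = 1" .
  then show ?thesis
    unfolding bernstein_pmf_def by (intro pmf_embed_pmf) (simp_all add: bernstein_weight_nonneg)
qed

definition bernstein_measure :: "nat \<Rightarrow> real measure" where
  "bernstein_measure n = distr (measure_pmf (bernstein_pmf n)) borel (\<lambda>k. real k / real n)"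

lemma real_distribution_bernstein_measure: "real_distribution (bernstein_measure n)"
  unfolding bernstein_measure_def real_distribution_def real_distribution_axioms_def
  by (auto intro: prob_space.prob_space_distr prob_space_measure_pmf)

lemma integral_bernstein_measure:
  assumes "g \<in> borel_measurable borel"
  shows "(\<integral>x. g x \<partial>bernstein_measure n) = (\<Sum>k\<le>n. bernstein_weight u n k * g (real k / real n))"
proof -
  have "set_pmf (bernstein_pmf n) \<subseteq> {..n}"
    by (auto simp: set_pmf_iff pmf_bernstein_pmf split: if_splits)
  then have "(\<integral>x. g x \<partial>bernstein_measure n) = (\<Sum>k\<le>n. g (real k / real n) * pmf (bernstein_pmf n) k)"
    unfolding bernstein_measure_def using assms
    by (subst integral_distr) (auto intro: integral_measure_pmf_real)
  then show ?thesis
    by (simp add: pmf_bernstein_pmf mult.commute)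
qed

lemma tight_bernstein_measure: "tight (\<lambda>n. bernstein_measure (Suc n))"
  unfolding tight_def
proof (intro conjI allI impI real_distribution_bernstein_measure)
  fix e :: real assume "e > 0"
  have "measure (bernstein_measure (Suc n)) {-1<..1} = 1" for n
  proof -
    interpret real_distribution "bernstein_measure (Suc n)"
      by (rule real_distribution_bernstein_measure)
    have "measure (bernstein_measure (Suc n)) {-1<..1}
        = (\<integral>x. indicator {-1<..1::real} x \<partial>bernstein_measure (Suc n))"
      by simp
    also have "\<dots> = (\<Sum>k\<le>Suc n. bernstein_weight u (Suc n) k * indicator {-1<..1::real} (real k / real (Suc n)))"
      by (rule integral_bernstein_measure) simp
    also have "\<dots> = (\<Sum>k\<le>Suc n. bernstein_weight u (Suc n) k)"
      by (intro sum.cong) (auto simp: indicator_def field_simps simp del: of_nat_Suc)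
    finally show ?thesis
      by (simp only: sum_bernstein_weight_eq_1)
  qed
  with \<open>e > 0\<close> show "\<exists>a b. a < b \<and> (\<forall>n. 1 - e < measure (bernstein_measure (Suc n)) {a<..b})"
    by (intro exI[of _ "-1"] exI[of _ 1]) auto
qed

theorem hausdorff_moment:
  obtains \<nu> where "real_distribution \<nu>" "emeasure \<nu> {0..1} = 1" "\<And>N. (\<integral>x. x ^ N \<partial>\<nu>) = u N"
proof -
  obtain r M where r: "strict_mono r" and M: "real_distribution M"
    and conv: "weak_conv_m ((\<lambda>n. bernstein_measure (Suc n)) \<circ> r) M"
    using tight_imp_convergent_subsubsequence[OF tight_bernstein_measure, of id]
    by (auto simp: strict_mono_def)
  interpret M: real_distribution M by (rule M)
  txt \<open>The approximating measures live on \<open>[0, 1]\<close>, so clamping the weak limit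
    to \<open>[0, 1]\<close> does not change its moments.\<close>
  define clamp where "clamp x = max 0 (min 1 x)" for x :: real
  have clamp_cont: "isCont clamp x" for x
    unfolding clamp_def by (intro continuous_intros)
  have clamp_meas: "clamp \<in> borel_measurable borel"
    unfolding clamp_def by measurable
  define \<nu> where "\<nu> = distr M borel clamp"
  have "real_distribution \<nu>"
    unfolding \<nu>_def real_distribution_def real_distribution_axioms_def
    using clamp_meas by (auto intro: M.prob_space_distr)
  moreover have "emeasure \<nu> {0..1} = 1"
  proof -
    have "clamp -` {0..1} = UNIV"
      by (auto simp: clamp_def)
    then show ?thesis
      using clamp_meas by (simp add: \<nu>_def emeasure_distr M.emeasure_space_1[simplified])
  qed
  moreover have "(\<integral>x. x ^ N \<partial>\<nu>) = u N" for N
  proof -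
    have "(\<lambda>m. \<integral>x. clamp x ^ N \<partial>((\<lambda>n. bernstein_measure (Suc n)) \<circ> r) m)
        \<longlonglongrightarrow> (\<integral>x. clamp x ^ N \<partial>M)"
      by (rule weak_conv_imp_integral_bdd_continuous_conv[OF _ M conv, where B=1])
        (auto intro!: continuous_intros clamp_cont real_distribution_bernstein_measure
          power_le_one simp: clamp_def)
    moreover have "(\<integral>x. clamp x ^ N \<partial>bernstein_measure n) = bernstein_moment n N" if "n > 0" for n
      unfolding integral_bernstein_measure[OF borel_measurable_power[OF clamp_meas]] bernstein_moment_def
      using that by (intro sum.cong) (auto simp: clamp_def)
    moreover have "(\<lambda>m. bernstein_moment (Suc (r m)) N) \<longlonglongrightarrow> u N"
      using LIMSEQ_subseq_LIMSEQ[OF bernstein_moment_tendsto, of "\<lambda>m. Suc (r m)"] r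
      by (simp add: strict_mono_def comp_def)
    ultimately have "(\<integral>x. clamp x ^ N \<partial>M) = u N"
      using LIMSEQ_unique by (auto simp: comp_def)
    then show ?thesis
      using clamp_meas by (simp add: \<nu>_def integral_distr)
  qed
  ultimately show ?thesis
    using that by blast
qed

end

section \<open>The renewal equation\<close>

lemma (in sequence_space) emeasure_PiM_first_step:
  assumes "A \<in> sets S"
  shows "emeasure S A = (\<integral>\<^sup>+s. emeasure S {\<omega> \<in> space S. case_nat s \<omega> \<in> A} \<partial>M)"
proof -
  let ?f = "\<lambda>(s, \<omega>). case_nat s \<omega>"
  have f: "?f \<in> measurable (M \<Otimes>\<^sub>M S) S"
    by measurable
  have "emeasure S A = emeasure (M \<Otimes>\<^sub>M S) (?f -` A \<inter> space (M \<Otimes>\<^sub>M S))"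
    by (subst PiM_iter[symmetric]) (rule emeasure_distr[OF f assms])
  also have "\<dots> = (\<integral>\<^sup>+s. emeasure S (Pair s -` (?f -` A \<inter> space (M \<Otimes>\<^sub>M S))) \<partial>M)"
    by (rule P.emeasure_pair_measure_alt) (rule measurable_sets[OF f assms])
  also have "\<dots> = (\<integral>\<^sup>+s. emeasure S {\<omega> \<in> space S. case_nat s \<omega> \<in> A} \<partial>M)"
    by (intro nn_integral_cong arg_cong[where f="emeasure S"]) (auto simp: space_pair_measure)
  finally show ?thesis .
qed

lemma sequence_space_measure_pmf: "sequence_space (measure_pmf K)"
  unfolding sequence_space_def product_prob_space_def product_prob_space_axioms_def
    product_sigma_finite_def
  by (auto intro: prob_space_measure_pmf prob_space_imp_sigma_finite)

lemma space_renewal_seq_law [simp]: "space (renewal_seq_law K) = UNIV"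
  by (auto simp: renewal_seq_law_def space_PiM)

lemma measurable_partial_sum:
  "(\<lambda>\<eta>. \<Sum>i<n. \<eta> i) \<in> measurable (renewal_seq_law K) (count_space UNIV)"
proof (induction n)
  case 0
  then show ?case by simp
next
  case (Suc n)
  have "(\<lambda>\<eta>. \<eta> n) \<in> measurable (renewal_seq_law K) (count_space UNIV)"
    unfolding renewal_seq_law_def
    using measurable_component_singleton[of n UNIV "\<lambda>_. measure_pmf K"]
    by (simp add: measurable_cong_sets)
  then have "(\<lambda>\<eta>. a + \<eta> n) \<in> measurable (renewal_seq_law K) (count_space UNIV)" for a :: enat
    by (rule measurable_compose) simp
  with Suc.IH show ?case
    by (simp add: measurable_compose_countable'[where I=UNIV and g="\<lambda>\<eta>. \<Sum>i<n. \<eta> i"])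
qed

lemma sets_renewal_event: "{\<eta>. N \<in> renewal_set \<eta>} \<in> sets (renewal_seq_law K)"
proof -
  have "{\<eta>. N \<in> renewal_set \<eta>} = (\<Union>n. (\<lambda>\<eta>. \<Sum>i<n. \<eta> i) -` {enat N} \<inter> space (renewal_seq_law K))"
    by (auto simp: renewal_set_def)
  also have "\<dots> \<in> sets (renewal_seq_law K)"
    using measurable_partial_sum by (intro sets.countable_UN) (auto simp: measurable_def)
  finally show ?thesis .
qed

lemma renewal_prob_eq: "renewal_prob K N = measure (renewal_seq_law K) {\<eta>. N \<in> renewal_set \<eta>}"
  by (simp add: renewal_prob_def)

lemma renewal_prob_nonneg: "0 \<le> renewal_prob K N"
  by (simp add: renewal_prob_def)

lemma renewal_prob_0: "renewal_prob K 0 = 1"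
proof -
  interpret sequence_space "measure_pmf K"
    by (rule sequence_space_measure_pmf)
  have "{\<eta>. 0 \<in> renewal_set \<eta>} = space S"
    by (auto simp: renewal_set_def space_PiM zero_enat_def intro!: exI[of _ 0])
  then show ?thesis
    by (simp add: renewal_prob_eq renewal_seq_law_def P.prob_space)
qed

lemma mem_renewal_set_case_nat:
  "Suc N \<in> renewal_set (case_nat s \<omega>) \<longleftrightarrow> (\<exists>m. s + (\<Sum>i<m. \<omega> i) = enat (Suc N))"
proof -
  have shift: "(\<Sum>i<Suc m. case_nat s \<omega> i) = s + (\<Sum>i<m. \<omega> i)" for m
    unfolding sum.lessThan_Suc_shift by simp
  show ?thesis
  proof
    assume "Suc N \<in> renewal_set (case_nat s \<omega>)"
    then obtain n where n: "(\<Sum>i<n. case_nat s \<omega> i) = enat (Suc N)"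
      by (auto simp: renewal_set_def)
    then obtain m where "n = Suc m"
      by (cases n) (auto simp: zero_enat_def)
    with n shift show "\<exists>m. s + (\<Sum>i<m. \<omega> i) = enat (Suc N)"
      by auto
  next
    assume "\<exists>m. s + (\<Sum>i<m. \<omega> i) = enat (Suc N)"
    then obtain m where "(\<Sum>i<Suc m. case_nat s \<omega> i) = enat (Suc N)"
      by (auto simp only: shift)
    then show "Suc N \<in> renewal_set (case_nat s \<omega>)"
      unfolding renewal_set_def by blast
  qed
qed

lemma mem_renewal_set_case_nat_enat:
  assumes "1 \<le> k" "k \<le> Suc N"
  shows "Suc N \<in> renewal_set (case_nat (enat k) \<omega>) \<longleftrightarrow> Suc N - k \<in> renewal_set \<omega>"
proof -
  have "enat k + e = enat (Suc N) \<longleftrightarrow> e = enat (Suc N - k)" for e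
    using assms by (cases e) auto
  then show ?thesis
    unfolding mem_renewal_set_case_nat by (simp add: renewal_set_def)
qed

lemma not_mem_renewal_set_case_nat:
  assumes "s \<noteq> 0" "s \<notin> enat ` {1..Suc N}"
  shows "Suc N \<notin> renewal_set (case_nat s \<omega>)"
proof
  assume "Suc N \<in> renewal_set (case_nat s \<omega>)"
  then obtain m where "s + (\<Sum>i<m. \<omega> i) = enat (Suc N)"
    unfolding mem_renewal_set_case_nat by blast
  then obtain k j where "s = enat k" "k + j = Suc N"
    by (cases s; cases "\<Sum>i<m. \<omega> i") auto
  with assms show False
    by (auto simp: zero_enat_def)
qed

theorem renewal_equation:
  assumes "pmf K 0 = 0"
  shows "renewal_prob K (Suc N) = (\<Sum>k=1..Suc N. pmf K (enat k) * renewal_prob K (Suc N - k))"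
proof -
  interpret sequence_space "measure_pmf K"
    by (rule sequence_space_measure_pmf)
  let ?slice = "\<lambda>s. emeasure S {\<omega>. Suc N \<in> renewal_set (case_nat s \<omega>)}"
  have nonneg: "0 \<le> (\<Sum>k=1..Suc N. pmf K (enat k) * renewal_prob K (Suc N - k))"
    by (intro sum_nonneg mult_nonneg_nonneg pmf_nonneg renewal_prob_nonneg)
  have "ennreal (renewal_prob K (Suc N)) = emeasure S {\<eta>. Suc N \<in> renewal_set \<eta>}"
    by (simp add: renewal_prob_eq renewal_seq_law_def emeasure_eq_measure)
  also have "\<dots> = (\<integral>\<^sup>+s. ?slice s \<partial>measure_pmf K)"
    using emeasure_PiM_first_step[OF sets_renewal_event[of _ K, unfolded renewal_seq_law_def]]
    by (simp add: space_PiM)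
  also have "\<dots> = (\<Sum>s\<in>enat ` {1..Suc N}. ?slice s * pmf K s)"
  proof (intro nn_integral_measure_pmf_support)
    fix s assume s: "s \<in> set_pmf K" "s \<notin> enat ` {1..Suc N}"
    moreover from s(1) assms have "s \<noteq> 0"
      by (auto simp: set_pmf_iff)
    ultimately show "?slice s = 0"
      by (simp add: not_mem_renewal_set_case_nat)
  qed simp_all
  also have "\<dots> = (\<Sum>k=1..Suc N. ?slice (enat k) * pmf K (enat k))"
    by (subst sum.reindex) (auto simp only: inj_on_def enat.inject comp_def)
  also have "\<dots> = (\<Sum>k=1..Suc N. ennreal (pmf K (enat k) * renewal_prob K (Suc N - k)))"
  proof (rule sum.cong[OF refl])
    fix k assume "k \<in> {1..Suc N}"
    then have "?slice (enat k) = emeasure S {\<omega>. Suc N - k \<in> renewal_set \<omega>}"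
      by (simp add: mem_renewal_set_case_nat_enat)
    also have "\<dots> = ennreal (renewal_prob K (Suc N - k))"
      by (simp add: renewal_prob_eq renewal_seq_law_def emeasure_eq_measure)
    finally show "?slice (enat k) * pmf K (enat k) = ennreal (pmf K (enat k) * renewal_prob K (Suc N - k))"
      by (simp add: ennreal_mult' mult.commute)
  qed
  also have "\<dots> = ennreal (\<Sum>k=1..Suc N. pmf K (enat k) * renewal_prob K (Suc N - k))"
    by (rule sum_ennreal) (intro mult_nonneg_nonneg pmf_nonneg renewal_prob_nonneg)
  finally show ?thesis
    by (rule ennreal_inj[OF renewal_prob_nonneg nonneg, THEN iffD1])
qed

section \<open>Positive contractions\<close>

lemma funpow_Suc_Suc: "(f ^^ Suc (Suc n)) x = f ((f ^^ n) (f x))"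
  by (simp add: funpow_swap1)

locale positive_contraction =
  fixes form :: "'a::ab_group_add \<Rightarrow> 'a \<Rightarrow> real" and T :: "'a \<Rightarrow> 'a"
  assumes form_diff_left: "form (a - b) c = form a c - form b c"
    and form_commute: "form a b = form b a"
    and form_nonneg: "form a a \<ge> 0"
    and diff: "T (a - b) = T a - T b"
    and symmetric: "form (T a) b = form a (T b)"
    and nonneg: "form (T a) a \<ge> 0"
    and le_id: "form (T a) a \<le> form a a"
begin

definition S :: "'a \<Rightarrow> 'a" where "S a = a - T a"

lemma form_diff_right: "form c (a - b) = form c a - form c b"
  by (simp add: form_commute[of c] form_diff_left)

lemma form_add_left: "form (a + b) c = form a c + form b c"
  using form_diff_left[of "a + b" b c] by simp

lemma S_symmetric: "form (S a) b = form a (S b)"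
  by (simp add: S_def form_diff_left form_diff_right symmetric)

lemma S_nonneg: "form (S a) a \<ge> 0"
  using le_id[of a] by (simp add: S_def form_diff_left)

lemma T_S_commute: "T (S a) = S (T a)"
  by (simp add: S_def diff)

lemma T_funpow_S: "T ((S ^^ j) a) = (S ^^ j) (T a)"
  by (induction j) (simp_all add: T_S_commute)

lemma S_funpow_T: "S ((T ^^ i) a) = (T ^^ i) (S a)"
  by (induction i) (simp_all add: T_S_commute[symmetric])

lemma funpow_T_S_commute: "(T ^^ i) ((S ^^ j) a) = (S ^^ j) ((T ^^ i) a)"
  by (induction i) (simp_all add: T_funpow_S)

text \<open>\<open>T S = S T S + T S T\<close>, and both terms are positive by symmetry.\<close>
lemma T_S_nonneg: "form (T (S a)) a \<ge> 0"
proof -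
  have decomp: "T (S a) = S (T (S a)) + T (S (T a))"
    by (simp add: S_def diff)
  have "form (T (S a)) a = form (S (T (S a)) + T (S (T a))) a"
    by (subst decomp) (rule refl)
  also have "\<dots> = form (S (T (S a))) a + form (T (S (T a))) a"
    by (rule form_add_left)
  also have "\<dots> = form (T (S a)) (S a) + form (S (T a)) (T a)"
    by (simp only: S_symmetric[of "T (S a)" a] symmetric[of "S (T a)" a])
  finally have "form (T (S a)) a = form (T (S a)) (S a) + form (S (T a)) (T a)" .
  then show ?thesis
    using nonneg[of "S a"] S_nonneg[of "T a"] by simp
qed

text \<open>By symmetry \<open>T\<^sup>2\<close> and \<open>S\<^sup>2\<close> can be split across the form, which reduces
  both exponents to at most one.\<close>
lemma funpow_T_S_nonneg: "form ((T ^^ i) ((S ^^ j) a)) a \<ge> 0"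
proof (induction "i + j" arbitrary: i j a rule: less_induct)
  case less
  consider k where "i = Suc (Suc k)" | k where "j = Suc (Suc k)" | "i \<le> 1" "j \<le> 1"
    by (cases "i \<le> 1"; cases "j \<le> 1") (auto simp: not_le dest!: less_imp_Suc_add)
  then show ?case
  proof cases
    case (1 k)
    have "form ((T ^^ i) ((S ^^ j) a)) a = form (T ((T ^^ k) (T ((S ^^ j) a)))) a"
      by (simp only: 1 funpow_Suc_Suc)
    also have "\<dots> = form ((T ^^ k) ((S ^^ j) (T a))) (T a)"
      by (simp only: symmetric T_funpow_S)
    finally show ?thesis
      using less[of k j "T a"] 1 by simp
  next
    case (2 k)
    have "form ((T ^^ i) ((S ^^ j) a)) a = form ((S ^^ Suc (Suc k)) ((T ^^ i) a)) a"
      by (simp only: 2 funpow_T_S_commute)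
    also have "\<dots> = form (S ((S ^^ k) (S ((T ^^ i) a)))) a"
      by (simp only: funpow_Suc_Suc)
    also have "\<dots> = form ((T ^^ i) ((S ^^ k) (S a))) (S a)"
      by (simp only: S_symmetric S_funpow_T funpow_T_S_commute)
    finally show ?thesis
      using less[of i k "S a"] 2 by simp
  next
    case 3
    then show ?thesis
      using form_nonneg[of a] nonneg[of a] S_nonneg[of a] T_S_nonneg[of a]
      by (auto simp: le_Suc_eq)
  qed
qed

lemma funpow_T_diff: "(T ^^ N) (a - b) = (T ^^ N) a - (T ^^ N) b"
  by (induction N) (simp_all add: diff)

lemma iter_diff_form_funpow:
  "iter_diff n (\<lambda>M. form ((T ^^ M) e) e) N = form ((T ^^ N) ((S ^^ n) e)) e"
proof (induction n arbitrary: N)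
  case 0
  then show ?case by simp
next
  case (Suc n)
  have "(T ^^ N) ((S ^^ Suc n) e) = (T ^^ N) ((S ^^ n) e - T ((S ^^ n) e))"
    by (simp only: funpow.simps comp_apply S_def)
  also have "\<dots> = (T ^^ N) ((S ^^ n) e) - (T ^^ Suc N) ((S ^^ n) e)"
    by (simp only: funpow_T_diff funpow_swap1 funpow.simps comp_apply)
  finally have "(T ^^ N) ((S ^^ Suc n) e) = (T ^^ N) ((S ^^ n) e) - (T ^^ Suc N) ((S ^^ n) e)" .
  then show ?case
    by (simp add: Suc.IH form_diff_left)
qed

lemma completely_monotone_form_funpow:
  assumes "form e e = 1"
  shows "completely_monotone (\<lambda>M. form ((T ^^ M) e) e)"
  by unfold_locales (simp_all add: assms iter_diff_form_funpow funpow_T_S_nonneg)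

end

section \<open>The renewal operator of a measure on the unit interval\<close>

lemma mult_nonneg_square: "0 \<le> c \<Longrightarrow> 0 \<le> c * b * (b::real)"
  by (simp add: mult.assoc)

locale prob_on_unit_interval = real_distribution \<mu> for \<mu> :: "real measure" +
  assumes AE_unit_interval: "AE x in \<mu>. x \<in> {0..1}"

lemma prob_on_unit_interval_intro:
  assumes "prob_space M" "sets M = sets borel" "emeasure M {0..1} = 1"
  shows "prob_on_unit_interval M"
proof -
  interpret prob_space M by fact
  have "AE x in M. x \<in> {0..1}"
    using assms(2,3) prob_eq_1[of "{0..1}"] by (simp add: emeasure_eq_measure)
  with assms(2) show ?thesis
    by unfold_locales
qed

context prob_on_unit_interval
begin

lemma integrable_poly: "integrable \<mu> (poly p)"
proof -
  have "compact (poly p ` {0..1})"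
    by (intro compact_continuous_image continuous_intros) auto
  then obtain B where B: "\<forall>x\<in>{0..1}. norm (poly p x) \<le> B"
    by (meson bounded_iff compact_imp_bounded image_eqI)
  have "poly p \<in> borel_measurable borel"
    by (intro borel_measurable_continuous_onI continuous_intros)
  then have "poly p \<in> borel_measurable \<mu>"
    using measurable_cong_sets[OF events_eq_borel refl] by blast
  moreover have "AE x in \<mu>. norm (poly p x) \<le> B"
    using AE_unit_interval by eventually_elim (use B in blast)
  ultimately show ?thesis
    by (intro integrable_const_bound[where B=B])
qed

definition poly_mean :: "real poly \<Rightarrow> real" where
  "poly_mean p = (\<integral>x. poly p x \<partial>\<mu>)"

lemma poly_mean_add: "poly_mean (p + q) = poly_mean p + poly_mean q"
  unfolding poly_mean_def poly_add[abs_def] by (simp add: integrable_poly)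

lemma poly_mean_diff: "poly_mean (p - q) = poly_mean p - poly_mean q"
  unfolding poly_mean_def poly_diff[abs_def] by (simp add: integrable_poly)

lemma poly_mean_smult: "poly_mean (smult c p) = c * poly_mean p"
  by (simp add: poly_mean_def)

lemma poly_mean_0 [simp]: "poly_mean 0 = 0"
  by (simp add: poly_mean_def)

lemma poly_mean_const: "poly_mean [:c:] = c"
  using prob_space by (simp add: poly_mean_def)

lemma poly_mean_sum: "finite A \<Longrightarrow> poly_mean (\<Sum>i\<in>A. p i) = (\<Sum>i\<in>A. poly_mean (p i))"
  by (induction A rule: finite_induct) (simp_all add: poly_mean_add)

lemma poly_mean_nonneg:
  assumes "\<And>x. x \<in> {0..1} \<Longrightarrow> poly p x \<ge> 0"
  shows "poly_mean p \<ge> 0"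
proof -
  have "AE x in \<mu>. 0 \<le> poly p x"
    using AE_unit_interval by eventually_elim (rule assms)
  then show ?thesis
    unfolding poly_mean_def by (rule integral_nonneg_AE)
qed

definition x_poly :: "real poly" where "x_poly = [:0, 1:]"
definition one_minus_x_poly :: "real poly" where "one_minus_x_poly = [:1, -1:]"

lemma poly_x_poly [simp]: "poly x_poly x = x"
  by (simp add: x_poly_def)

lemma poly_one_minus_x_poly [simp]: "poly one_minus_x_poly x = 1 - x"
  by (simp add: one_minus_x_poly_def)

definition renewal_form :: "real \<times> real poly \<Rightarrow> real \<times> real poly \<Rightarrow> real" where
  "renewal_form a b = fst a * fst b + poly_mean (x_poly * one_minus_x_poly * snd a * snd b)"

definition renewal_profile :: "real \<times> real poly \<Rightarrow> real poly" where
  "renewal_profile a = [:fst a:] + one_minus_x_poly * snd a"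

definition renewal_op :: "real \<times> real poly \<Rightarrow> real \<times> real poly" where
  "renewal_op a = (poly_mean (x_poly * renewal_profile a), renewal_profile a)"

lemma fst_renewal_op: "fst (renewal_op a) = poly_mean (x_poly * renewal_profile a)"
  by (simp add: renewal_op_def)

lemma snd_renewal_op: "snd (renewal_op a) = renewal_profile a"
  by (simp add: renewal_op_def)

lemma renewal_profile_diff: "renewal_profile (a - b) = renewal_profile a - renewal_profile b"
  by (simp add: renewal_profile_def algebra_simps)

lemma renewal_form_renewal_op:
  "renewal_form (renewal_op a) b = poly_mean (x_poly * snd (renewal_op a) * snd (renewal_op b))"
proof -
  have "x_poly * snd (renewal_op a) * snd (renewal_op b)
      = smult (fst b) (x_poly * snd (renewal_op a)) + x_poly * one_minus_x_poly * snd (renewal_op a) * snd b"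
    by (rule poly_ext) (simp add: renewal_op_def renewal_profile_def algebra_simps)
  then show ?thesis
    by (simp add: renewal_form_def renewal_op_def renewal_profile_def poly_mean_add poly_mean_smult)
qed

lemma renewal_form_minus_renewal_op:
  "renewal_form a a - renewal_form (renewal_op a) a
    = poly_mean (one_minus_x_poly * ([:fst a:] - x_poly * snd a) * ([:fst a:] - x_poly * snd a))"
proof -
  have "one_minus_x_poly * ([:fst a:] - x_poly * snd a) * ([:fst a:] - x_poly * snd a)
      = [:fst a * fst a:] + x_poly * one_minus_x_poly * snd a * snd a
        - x_poly * snd (renewal_op a) * snd (renewal_op a)"
    by (rule poly_ext) (simp add: renewal_op_def renewal_profile_def algebra_simps)
  then show ?thesis
    unfolding renewal_form_renewal_op
    by (simp add: renewal_form_def poly_mean_add poly_mean_diff poly_mean_const)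
qed

lemma renewal_form_commute: "renewal_form a b = renewal_form b a"
  by (simp add: renewal_form_def mult.commute mult.left_commute)

sublocale renewal: positive_contraction renewal_form renewal_op
proof
  fix a b c :: "real \<times> real poly"
  have "x_poly * one_minus_x_poly * snd (a - b) * snd c
      = x_poly * one_minus_x_poly * snd a * snd c - x_poly * one_minus_x_poly * snd b * snd c"
    by (simp add: algebra_simps)
  then show "renewal_form (a - b) c = renewal_form a c - renewal_form b c"
    by (simp add: renewal_form_def poly_mean_diff algebra_simps)
  show "renewal_form a b = renewal_form b a"
    by (rule renewal_form_commute)
  show "renewal_form a a \<ge> 0"
    unfolding renewal_form_def
    by (intro add_nonneg_nonneg poly_mean_nonneg) (auto intro!: mult_nonneg_square)
  show "renewal_op (a - b) = renewal_op a - renewal_op b"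
    by (simp add: renewal_op_def renewal_profile_diff right_diff_distrib poly_mean_diff)
  show "renewal_form (renewal_op a) b = renewal_form a (renewal_op b)"
    by (simp add: renewal_form_renewal_op renewal_form_commute[of a] mult.commute mult.left_commute)
  show "renewal_form (renewal_op a) a \<ge> 0"
    unfolding renewal_form_renewal_op by (rule poly_mean_nonneg) (auto intro!: mult_nonneg_square)
  show "renewal_form (renewal_op a) a \<le> renewal_form a a"
  proof -
    have "poly_mean (one_minus_x_poly * ([:fst a:] - x_poly * snd a) * ([:fst a:] - x_poly * snd a)) \<ge> 0"
      by (rule poly_mean_nonneg) (auto intro!: mult_nonneg_square)
    then show ?thesis
      using renewal_form_minus_renewal_op[of a] by simp
  qed
qed

definition renewal_seq :: "nat \<Rightarrow> real" where
  "renewal_seq M = renewal_form ((renewal_op ^^ M) (1, 0)) (1, 0)"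

lemma renewal_seq_eq_fst: "renewal_seq M = fst ((renewal_op ^^ M) (1, 0))"
  by (simp add: renewal_seq_def renewal_form_def)

lemma completely_monotone_renewal_seq: "completely_monotone renewal_seq"
  unfolding renewal_seq_def
  by (rule renewal.completely_monotone_form_funpow) (simp add: renewal_form_def)

lemma snd_renewal_op_funpow:
  "snd ((renewal_op ^^ M) (1, 0)) = (\<Sum>j<M. smult (renewal_seq j) (one_minus_x_poly ^ (M - 1 - j)))"
proof (induction M)
  case 0
  then show ?case by simp
next
  case (Suc M)
  have "one_minus_x_poly * (\<Sum>j<M. smult (renewal_seq j) (one_minus_x_poly ^ (M - 1 - j)))
      = (\<Sum>j<M. smult (renewal_seq j) (one_minus_x_poly ^ (M - j)))"
    unfolding sum_distrib_left
    by (intro sum.cong refl) (simp add: mult_smult_right power_Suc[symmetric] Suc_diff_Suc)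
  then show ?case
    by (simp add: snd_renewal_op renewal_profile_def Suc.IH renewal_seq_eq_fst)
qed

lemma renewal_seq_Suc:
  "renewal_seq (Suc M) = (\<Sum>j\<le>M. renewal_seq j * (\<integral>x. (1 - x) ^ (M - j) * x \<partial>\<mu>))"
proof -
  have "renewal_seq (Suc M) = poly_mean (x_poly * snd ((renewal_op ^^ Suc M) (1, 0)))"
    by (simp add: renewal_seq_eq_fst fst_renewal_op snd_renewal_op)
  also have "\<dots> = poly_mean (\<Sum>j\<le>M. smult (renewal_seq j) (x_poly * one_minus_x_poly ^ (M - j)))"
    unfolding snd_renewal_op_funpow sum_distrib_left lessThan_Suc_atMost
    by (simp add: mult_smult_right)
  also have "\<dots> = (\<Sum>j\<le>M. renewal_seq j * poly_mean (x_poly * one_minus_x_poly ^ (M - j)))"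
    by (simp only: poly_mean_sum[OF finite_atMost] poly_mean_smult)
  also have "\<dots> = (\<Sum>j\<le>M. renewal_seq j * (\<integral>x. (1 - x) ^ (M - j) * x \<partial>\<mu>))"
    by (simp add: poly_mean_def poly_power mult.commute)
  finally show ?thesis .
qed

end

section \<open>Stieltjes transforms\<close>

lemma abs_Im_le_norm_of_real_diff: "\<bar>Im z\<bar> \<le> norm (complex_of_real x - z)"
  using abs_Im_le_cmod[of "complex_of_real x - z"] by simp

lemma of_real_diff_nonzero: "Im z \<noteq> 0 \<Longrightarrow> complex_of_real x - z \<noteq> 0"
  using abs_Im_le_norm_of_real_diff[of z x] by auto

lemma norm_inverse_of_real_diff_le: "Im z \<noteq> 0 \<Longrightarrow> norm (1 / (complex_of_real x - z)) \<le> 1 / \<bar>Im z\<bar>"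
  using abs_Im_le_norm_of_real_diff[of z x] by (simp add: norm_divide divide_simps)

lemma norm_inverse_prod_of_real_diff_le:
  assumes "Im y \<noteq> 0" "Im z \<noteq> 0"
  shows "norm (1 / ((complex_of_real x - y) * (complex_of_real x - z))) \<le> 1 / (\<bar>Im y\<bar> * \<bar>Im z\<bar>)"
  using assms abs_Im_le_norm_of_real_diff[of y x] abs_Im_le_norm_of_real_diff[of z x]
  by (simp add: norm_divide norm_mult frac_le mult_mono)

lemma inverse_diff_inverse_of_real_diff:
  assumes "Im y \<noteq> 0" "Im z \<noteq> 0"
  shows "1 / (complex_of_real x - y) - 1 / (complex_of_real x - z)
    = (y - z) * (1 / ((complex_of_real x - y) * (complex_of_real x - z)))"
  using of_real_diff_nonzero[OF assms(1), of x] of_real_diff_nonzero[OF assms(2), of x]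
  by (simp add: field_simps)

context real_distribution
begin

lemma integrable_bounded_borel:
  fixes g :: "real \<Rightarrow> 'b::{banach, second_countable_topology}"
  assumes "g \<in> borel_measurable borel" "\<And>x. norm (g x) \<le> B"
  shows "integrable M g"
  using assms measurable_cong_sets[OF events_eq_borel refl]
  by (intro integrable_const_bound[where B=B]) auto

lemma norm_integral_le_const:
  fixes g :: "real \<Rightarrow> 'b::{banach, second_countable_topology}"
  assumes "g \<in> borel_measurable borel" "\<And>x. norm (g x) \<le> B"
  shows "norm (\<integral>x. g x \<partial>M) \<le> B"
proof -
  have "norm (\<integral>x. g x \<partial>M) \<le> (\<integral>x. norm (g x) \<partial>M)"
    by (rule integral_norm_bound)
  also have "\<dots> \<le> B"
    using integrable_bounded_borel[OF assms] assms(2) by (intro integral_le_const) auto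
  finally show ?thesis .
qed

lemma integrable_inverse_prod_of_real_diff:
  "Im y \<noteq> 0 \<Longrightarrow> Im z \<noteq> 0 \<Longrightarrow>
    integrable M (\<lambda>x. 1 / ((complex_of_real x - y) * (complex_of_real x - z)))"
  by (rule integrable_bounded_borel[OF _ norm_inverse_prod_of_real_diff_le]) measurable

lemma integrable_inverse_of_real_diff: "Im z \<noteq> 0 \<Longrightarrow> integrable M (\<lambda>x. 1 / (complex_of_real x - z))"
  by (rule integrable_bounded_borel[OF _ norm_inverse_of_real_diff_le]) measurable

lemma stieltjes_diff:
  assumes "Im y \<noteq> 0" "Im z \<noteq> 0"
  shows "stieltjes M y - stieltjes M z
    = (y - z) * (\<integral>x. 1 / ((complex_of_real x - y) * (complex_of_real x - z)) \<partial>M)"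
proof -
  have "stieltjes M y - stieltjes M z
      = (\<integral>x. 1 / (complex_of_real x - y) - 1 / (complex_of_real x - z) \<partial>M)"
    unfolding stieltjes_def
    by (rule Bochner_Integration.integral_diff[symmetric])
      (simp_all add: integrable_inverse_of_real_diff assms)
  also have "\<dots> = (\<integral>x. (y - z) * (1 / ((complex_of_real x - y) * (complex_of_real x - z))) \<partial>M)"
    by (simp only: inverse_diff_inverse_of_real_diff[OF assms])
  finally show ?thesis
    by (simp only: integral_mult_right_zero)
qed

lemma stieltjes_quotient_bound:
  assumes "Im y \<noteq> 0" "Im z \<noteq> 0" "y \<noteq> z"
  shows "norm ((stieltjes M y - stieltjes M z) / (y - z)
      - (\<integral>x. 1 / ((complex_of_real x - z) * (complex_of_real x - z)) \<partial>M))
    \<le> norm (y - z) / (\<bar>Im y\<bar> * \<bar>Im z\<bar> * \<bar>Im z\<bar>)"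
proof -
  let ?p = "\<lambda>x v w. 1 / ((complex_of_real x - v) * (complex_of_real x - w))"
  let ?g = "\<lambda>x. (y - z) * ?p x y z * (1 / (complex_of_real x - z))"
  have "1 / (a * b) - 1 / (b * b) = (b - a) * (1 / (a * b)) * (1 / b)" if "a \<noteq> 0" "b \<noteq> 0" for a b :: complex
    using that by (simp add: field_simps)
  from this[OF of_real_diff_nonzero[OF assms(1)] of_real_diff_nonzero[OF assms(2)]]
  have "?p x y z - ?p x z z = ?g x" for x
    by simp
  then have "(stieltjes M y - stieltjes M z) / (y - z) - (\<integral>x. ?p x z z \<partial>M) = (\<integral>x. ?g x \<partial>M)"
    using assms
    by (simp add: stieltjes_diff integrable_inverse_prod_of_real_diff
        flip: Bochner_Integration.integral_diff)
  also have "norm \<dots> \<le> norm (y - z) * (1 / (\<bar>Im y\<bar> * \<bar>Im z\<bar>)) * (1 / \<bar>Im z\<bar>)"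
  proof (rule norm_integral_le_const)
    show "?g \<in> borel_measurable borel"
      by measurable
    show "norm (?g x) \<le> norm (y - z) * (1 / (\<bar>Im y\<bar> * \<bar>Im z\<bar>)) * (1 / \<bar>Im z\<bar>)" for x
      unfolding norm_mult using assms
      by (intro mult_mono norm_inverse_prod_of_real_diff_le norm_inverse_of_real_diff_le) auto
  qed
  finally show ?thesis
    by simp
qed

lemma stieltjes_has_field_derivative:
  assumes "Im z \<noteq> 0"
  shows "(stieltjes M has_field_derivative
    (\<integral>x. 1 / ((complex_of_real x - z) * (complex_of_real x - z)) \<partial>M)) (at z)"
proof -
  let ?D = "\<integral>x. 1 / ((complex_of_real x - z) * (complex_of_real x - z)) \<partial>M"
  have "\<forall>\<^sub>F y in at z. Im y \<noteq> 0"
    by (rule tendsto_imp_eventually_ne[OF tendsto_Im[OF tendsto_ident_at] assms])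
  moreover have "\<forall>\<^sub>F y in at z. y \<noteq> z"
    by (simp add: eventually_at_filter)
  ultimately have "\<forall>\<^sub>F y in at z. norm ((stieltjes M y - stieltjes M z) / (y - z) - ?D)
      \<le> norm (y - z) / (\<bar>Im y\<bar> * \<bar>Im z\<bar> * \<bar>Im z\<bar>)"
    by eventually_elim (rule stieltjes_quotient_bound[OF _ assms])
  moreover have "((\<lambda>y. norm (y - z) / (\<bar>Im y\<bar> * \<bar>Im z\<bar> * \<bar>Im z\<bar>)) \<longlongrightarrow> 0) (at z)"
    using assms by (auto intro!: tendsto_eq_intros)
  ultimately have "((\<lambda>y. (stieltjes M y - stieltjes M z) / (y - z) - ?D) \<longlongrightarrow> 0) (at z)"
    by (rule Lim_null_comparison)
  then show ?thesis
    by (simp add: has_field_derivative_iff LIM_zero_cancel)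
qed

lemma stieltjes_holomorphic: "stieltjes M holomorphic_on {z. Im z \<noteq> 0}"
  using stieltjes_has_field_derivative
  by (auto simp: holomorphic_on_def field_differentiable_def intro: has_field_derivative_at_within)

end

context prob_on_unit_interval
begin

lemma abs_integral_le_1:
  fixes f :: "real \<Rightarrow> real"
  assumes "f \<in> borel_measurable borel" "\<And>x. x \<in> {0..1} \<Longrightarrow> \<bar>f x\<bar> \<le> 1"
  shows "\<bar>\<integral>x. f x \<partial>\<mu>\<bar> \<le> 1"
proof -
  have AE_bound: "AE x in \<mu>. norm (f x) \<le> 1"
    using AE_unit_interval by eventually_elim (use assms(2) in \<open>auto simp: real_norm_def\<close>)
  moreover have "f \<in> borel_measurable \<mu>"
    using assms(1) measurable_cong_sets[OF events_eq_borel refl] by blast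
  ultimately have "integrable \<mu> f"
    by (rule integrable_const_bound)
  then have "(\<integral>x. norm (f x) \<partial>\<mu>) \<le> 1"
    using AE_bound by (intro integral_le_const) auto
  then have "norm (\<integral>x. f x \<partial>\<mu>) \<le> 1"
    by (rule order_trans[OF integral_norm_bound])
  then show ?thesis
    by simp
qed

lemma sums_integral_geometric_bound:
  fixes f :: "nat \<Rightarrow> real \<Rightarrow> complex"
  assumes meas: "\<And>n. f n \<in> borel_measurable borel" "g \<in> borel_measurable borel"
    and bound: "\<And>n x. x \<in> {0..1} \<Longrightarrow> norm (f n x) \<le> q ^ n" and q: "0 \<le> q" "q < 1"
    and sums: "\<And>x. x \<in> {0..1} \<Longrightarrow> (\<lambda>n. f n x) sums g x"
  shows "(\<lambda>n. \<integral>x. f n x \<partial>\<mu>) sums (\<integral>x. g x \<partial>\<mu>)"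
proof -
  have measM: "f n \<in> borel_measurable \<mu>" "g \<in> borel_measurable \<mu>" for n
    using meas measurable_cong_sets[OF events_eq_borel refl] by blast+
  have AE_bound: "AE x in \<mu>. norm (f n x) \<le> q ^ n" for n
    using AE_unit_interval by eventually_elim (rule bound)
  have int: "integrable \<mu> (f n)" for n
    by (rule integrable_const_bound[OF AE_bound measM(1)])
  have geom: "summable (\<lambda>n. q ^ n)"
    using q by (intro summable_geometric) auto
  have AE_summable: "AE x in \<mu>. summable (\<lambda>n. norm (f n x))"
    using AE_unit_interval
    by eventually_elim (rule summable_comparison_test'[OF geom], use bound in auto)
  have "(\<integral>x. norm (f n x) \<partial>\<mu>) \<le> q ^ n" for n
    using int AE_bound by (intro integral_le_const) auto
  then have summable_int: "summable (\<lambda>n. \<integral>x. norm (f n x) \<partial>\<mu>)"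
    by (intro summable_comparison_test'[OF geom]) auto
  have "(\<lambda>n. \<integral>x. f n x \<partial>\<mu>) sums (\<integral>x. (\<Sum>n. f n x) \<partial>\<mu>)"
    by (rule sums_integral[OF int AE_summable summable_int])
  also have "(\<integral>x. (\<Sum>n. f n x) \<partial>\<mu>) = (\<integral>x. g x \<partial>\<mu>)"
  proof (rule integral_cong_AE)
    show "(\<lambda>x. \<Sum>n. f n x) \<in> borel_measurable \<mu>"
      by (rule borel_measurable_integrable[OF integrable_suminf[OF int AE_summable summable_int]])
    show "AE x in \<mu>. (\<Sum>n. f n x) = g x"
      using AE_unit_interval by eventually_elim (use sums in \<open>simp add: sums_iff\<close>)
  qed (rule measM)
  finally show ?thesis .
qed

lemma stieltjes_moment_series:
  assumes "1 < norm z"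
  shows "(\<lambda>N. - complex_of_real (\<integral>x. x ^ N \<partial>\<mu>) / z ^ Suc N) sums stieltjes \<mu> z"
proof -
  have z: "z \<noteq> 0"
    using assms by auto
  have "(\<lambda>N. \<integral>x. (- (complex_of_real x ^ N) / z ^ Suc N) \<partial>\<mu>) sums (\<integral>x. 1 / (complex_of_real x - z) \<partial>\<mu>)"
  proof (rule sums_integral_geometric_bound)
    show "norm (- (complex_of_real x ^ N) / z ^ Suc N) \<le> (1 / norm z) ^ N" if "x \<in> {0..1}" for N x
    proof -
      have "norm (- (complex_of_real x ^ N) / z ^ Suc N) \<le> 1 / norm z ^ Suc N"
        using that z by (auto simp: norm_divide norm_mult norm_power intro!: divide_right_mono power_le_one)
      also have "\<dots> = (1 / norm z) ^ Suc N"
        by (simp only: power_one_over)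
      also have "\<dots> \<le> (1 / norm z) ^ N"
        using assms by (intro power_decreasing) (auto simp: divide_le_eq_1)
      finally show ?thesis .
    qed
    show "(\<lambda>N. - (complex_of_real x ^ N) / z ^ Suc N) sums (1 / (complex_of_real x - z))"
      if "x \<in> {0..1}" for x
    proof -
      have x: "norm (complex_of_real x) < norm z"
        using that assms by simp
      then have "norm (complex_of_real x / z) < 1"
        by (simp add: norm_divide divide_less_eq)
      moreover have "(\<lambda>N. - (complex_of_real x ^ N) / z ^ Suc N) = (\<lambda>N. (- 1 / z) * (complex_of_real x / z) ^ N)"
        by (simp add: fun_eq_iff power_divide)
      moreover have "complex_of_real x - z \<noteq> 0" "z - complex_of_real x \<noteq> 0"
        using x by auto
      then have "1 / (complex_of_real x - z) = (- 1 / z) * (1 / (1 - complex_of_real x / z))"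
        using z by (simp add: field_simps)
      ultimately show ?thesis
        by (simp only: sums_mult geometric_sums)
    qed
  qed (use assms in \<open>auto simp: divide_less_eq\<close>)
  then show ?thesis
    by (simp add: stieltjes_def flip: of_real_power)
qed

end

context prob_on_unit_interval
begin

lemma stieltjes_reflected_series:
  assumes "1 < norm z" "Im z \<noteq> 0"
  shows "(\<lambda>j. complex_of_real (\<integral>x. (1 - x) ^ j * x \<partial>\<mu>) * (1 / z) ^ Suc j)
    sums (1 - (z - 1) * stieltjes \<mu> (1 - z))"
proof -
  define w where "w = 1 / z"
  have w: "norm w < 1" "z \<noteq> 0"
    using assms by (auto simp: w_def norm_divide divide_less_eq)
  have Im: "Im (1 - z) \<noteq> 0"
    using assms by simp
  have "(\<lambda>j. \<integral>x. complex_of_real ((1 - x) ^ j * x) * w ^ Suc j \<partial>\<mu>)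
      sums (\<integral>x. 1 - (z - 1) * (1 / (complex_of_real x - (1 - z))) \<partial>\<mu>)"
  proof (rule sums_integral_geometric_bound)
    show "norm (complex_of_real ((1 - x) ^ j * x) * w ^ Suc j) \<le> norm w ^ j" if "x \<in> {0..1}" for j x
    proof -
      have "\<bar>(1 - x) ^ j * x\<bar> \<le> 1"
        using that by (auto simp: abs_mult intro!: mult_le_one power_le_one)
      moreover have "norm w ^ Suc j \<le> norm w ^ j"
        using w by (intro power_decreasing) auto
      ultimately have "\<bar>(1 - x) ^ j * x\<bar> * norm w ^ Suc j \<le> 1 * norm w ^ j"
        by (intro mult_mono) auto
      then show ?thesis
        by (simp add: norm_mult norm_power del: of_real_mult of_real_power)
    qed
    show "(\<lambda>j. complex_of_real ((1 - x) ^ j * x) * w ^ Suc j)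
        sums (1 - (z - 1) * (1 / (complex_of_real x - (1 - z))))" if "x \<in> {0..1}" for x
    proof -
      have "norm (complex_of_real (1 - x)) * norm w \<le> 1 * norm w"
        using that by (intro mult_right_mono) (auto simp del: of_real_diff)
      then have "norm (complex_of_real (1 - x) * w) < 1"
        using w by (simp add: norm_mult del: of_real_diff)
      moreover have "(\<lambda>j. complex_of_real ((1 - x) ^ j * x) * w ^ Suc j)
          = (\<lambda>j. (complex_of_real x * w) * (complex_of_real (1 - x) * w) ^ j)"
        by (simp add: fun_eq_iff power_mult_distrib mult_ac)
      moreover have "complex_of_real x - (1 - z) \<noteq> 0" "z - complex_of_real (1 - x) \<noteq> 0"
        using of_real_diff_nonzero[OF Im, of x] by (auto simp: algebra_simps)
      then have "1 - (z - 1) * (1 / (complex_of_real x - (1 - z)))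
          = (complex_of_real x * w) * (1 / (1 - complex_of_real (1 - x) * w))"
        using w by (simp add: w_def field_simps)
      ultimately show ?thesis
        by (simp only: sums_mult geometric_sums)
    qed
  qed (use w in \<open>auto\<close>)
  moreover have "(\<integral>x. 1 - (z - 1) * (1 / (complex_of_real x - (1 - z))) \<partial>\<mu>)
      = (\<integral>x. 1 \<partial>\<mu>) - (\<integral>x. (z - 1) * (1 / (complex_of_real x - (1 - z))) \<partial>\<mu>)"
    using Im by (intro Bochner_Integration.integral_diff integrable_mult_right
        integrable_inverse_of_real_diff) auto
  moreover have "(\<integral>x. (z - 1) * (1 / (complex_of_real x - (1 - z))) \<partial>\<mu>) = (z - 1) * stieltjes \<mu> (1 - z)"
    unfolding stieltjes_def by (rule integral_mult_right_zero)
  ultimately show ?thesis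
    using prob_space by (simp add: w_def flip: integral_complex_of_real)
qed

end

lemma power_series_renewal_identity:
  fixes u k :: "nat \<Rightarrow> real" and w :: complex
  assumes "\<And>N. \<bar>u N\<bar> \<le> 1" "\<And>i. \<bar>k i\<bar> \<le> 1" "norm w < 1"
    and "u 0 = 1" and "\<And>M. u (Suc M) = (\<Sum>j\<le>M. u j * k (M - j))"
  shows "(\<Sum>N. complex_of_real (u N) * w ^ N) * (1 - (\<Sum>i. complex_of_real (k i) * w ^ Suc i)) = 1"
proof -
  define a where "a N = complex_of_real (u N) * w ^ N" for N
  define b where "b i = complex_of_real (k i) * w ^ Suc i" for i
  have geom: "summable (\<lambda>n. norm w ^ n)"
    using assms by (intro summable_geometric) auto
  have "summable (\<lambda>N. norm (a N))"
    using assms by (intro summable_comparison_test'[OF geom])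
      (auto intro!: mult_left_le_one_le simp: a_def norm_mult norm_power)
  moreover have "summable (\<lambda>i. norm (b i))"
    using assms by (intro summable_comparison_test'[OF summable_mult[OF geom, of "norm w"]])
      (auto intro!: mult_left_le_one_le simp: b_def norm_mult norm_power)
  ultimately have "(\<lambda>n. \<Sum>i\<le>n. a i * b (n - i)) sums ((\<Sum>N. a N) * (\<Sum>i. b i))"
    by (rule Cauchy_product_sums)
  moreover have "(\<Sum>i\<le>n. a i * b (n - i)) = a (Suc n)" for n
  proof -
    have "(\<Sum>i\<le>n. a i * b (n - i)) = (\<Sum>i\<le>n. w ^ Suc n * complex_of_real (u i * k (n - i)))"
      by (intro sum.cong refl) (auto simp: a_def b_def power_add[symmetric] mult_ac)
    then show ?thesis
      by (simp add: a_def assms(5) sum_distrib_left mult.commute)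
  qed
  ultimately have "(\<lambda>n. a (Suc n)) sums ((\<Sum>N. a N) * (\<Sum>i. b i))"
    by simp
  moreover have "a sums (\<Sum>N. a N)"
    by (rule summable_sums[OF summable_norm_cancel[OF \<open>summable (\<lambda>N. norm (a N))\<close>]])
  then have "(\<lambda>n. a (Suc n)) sums ((\<Sum>N. a N) - 1)"
    using assms(4) by (subst sums_Suc_iff) (simp only: a_def[of 0] power_0 of_real_1 mult_1 diff_add_cancel)
  ultimately have "(\<Sum>N. a N) * (\<Sum>i. b i) = (\<Sum>N. a N) - 1"
    by (rule sums_unique2)
  then show ?thesis
    by (simp add: a_def b_def algebra_simps)
qed

context prob_on_unit_interval
begin

lemma renewal_prob_eq_renewal_seq:
  assumes "pmf K 0 = 0" "\<And>n. n \<ge> 1 \<Longrightarrow> pmf K (enat n) = (\<integral>x. (1 - x) ^ (n - 1) * x \<partial>\<mu>)"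
  shows "renewal_prob K N = renewal_seq N"
proof (induction N rule: less_induct)
  case (less N)
  show ?case
  proof (cases N)
    case 0
    then show ?thesis
      by (simp add: renewal_prob_0 renewal_seq_eq_fst)
  next
    case (Suc M)
    have "renewal_prob K N = (\<Sum>k=1..Suc M. pmf K (enat k) * renewal_prob K (Suc M - k))"
      unfolding Suc by (rule renewal_equation[OF assms(1)])
    also have "\<dots> = (\<Sum>j\<le>M. renewal_seq j * (\<integral>x. (1 - x) ^ (M - j) * x \<partial>\<mu>))"
      using less Suc
      by (intro sum.reindex_bij_witness[of _ "\<lambda>j. Suc M - j" "\<lambda>k. Suc M - k"])
        (auto simp: assms(2) mult.commute Suc_diff_le)
    also have "\<dots> = renewal_seq N"
      by (simp add: Suc renewal_seq_Suc)
    finally show ?thesis .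
  qed
qed

lemma integral_power_0: "(\<integral>x. x ^ 0 \<partial>\<mu>) = 1"
  using prob_space by simp

lemma abs_moment_le_1: "\<bar>\<integral>x. x ^ N \<partial>\<mu>\<bar> \<le> 1"
  by (rule abs_integral_le_1) (auto simp: power_le_one abs_if)

lemma abs_integral_geometric_le_1: "\<bar>\<integral>x. (1 - x) ^ i * x \<partial>\<mu>\<bar> \<le> 1"
  by (rule abs_integral_le_1) (auto simp: abs_mult intro!: mult_le_one power_le_one)

end

lemma stieltjes_renewal_identity_outside_unit_disc:
  assumes \<nu>: "prob_on_unit_interval \<nu>" and \<mu>: "prob_on_unit_interval \<mu>"
    and moments: "\<And>M. (\<integral>x. x ^ Suc M \<partial>\<nu>) = (\<Sum>j\<le>M. (\<integral>x. x ^ j \<partial>\<nu>) * (\<integral>x. (1 - x) ^ (M - j) * x \<partial>\<mu>))"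
    and z: "1 < norm z" "Im z \<noteq> 0"
  shows "stieltjes \<nu> z * stieltjes \<mu> (1 - z) = 1 / (z * (1 - z))"
proof -
  interpret \<nu>: prob_on_unit_interval \<nu> by (rule \<nu>)
  interpret \<mu>: prob_on_unit_interval \<mu> by (rule \<mu>)
  define w where "w = 1 / z"
  have w: "norm w < 1" "z \<noteq> 0" "w * z = 1"
    using z by (auto simp: w_def norm_divide divide_less_eq)
  define U where "U = (\<Sum>N. complex_of_real (\<integral>x. x ^ N \<partial>\<nu>) * w ^ N)"
  define G where "G = (\<Sum>i. complex_of_real (\<integral>x. (1 - x) ^ i * x \<partial>\<mu>) * w ^ Suc i)"
  have series_eq: "(\<lambda>N. - complex_of_real (\<integral>x. x ^ N \<partial>\<nu>) / z ^ Suc N)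
      = (\<lambda>N. (- w) * (complex_of_real (\<integral>x. x ^ N \<partial>\<nu>) * w ^ N))"
    by (simp add: w_def fun_eq_iff power_one_over field_simps)
  have target_eq: "(- w) * (- z * stieltjes \<nu> z) = stieltjes \<nu> z"
    using w(3) by (simp add: mult.assoc[symmetric])
  have "(\<lambda>N. (- w) * (complex_of_real (\<integral>x. x ^ N \<partial>\<nu>) * w ^ N)) sums ((- w) * (- z * stieltjes \<nu> z))"
    using \<nu>.stieltjes_moment_series[OF z(1)] unfolding series_eq target_eq .
  moreover have "- w \<noteq> 0"
    using w by auto
  ultimately have "(\<lambda>N. complex_of_real (\<integral>x. x ^ N \<partial>\<nu>) * w ^ N) sums (- z * stieltjes \<nu> z)"
    using sums_mult_iff by blast
  then have U: "U = - z * stieltjes \<nu> z"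
    by (simp add: U_def sums_iff)
  have G: "G = 1 - (z - 1) * stieltjes \<mu> (1 - z)"
    using \<mu>.stieltjes_reflected_series[OF z] by (simp add: G_def w_def sums_iff)
  have "U * (1 - G) = 1"
    unfolding U_def G_def using \<nu>.integral_power_0 moments
    by (rule power_series_renewal_identity[OF \<nu>.abs_moment_le_1 \<mu>.abs_integral_geometric_le_1 w(1)])
  moreover have "z - z * z \<noteq> 0"
    using w(2) z(2) by (auto simp: right_diff_distrib[symmetric])
  ultimately show ?thesis
    unfolding U G by (simp add: field_simps)
qed

theorem stieltjes_renewal_identity:
  assumes \<nu>: "prob_on_unit_interval \<nu>" and \<mu>: "prob_on_unit_interval \<mu>"
    and moments: "\<And>M. (\<integral>x. x ^ Suc M \<partial>\<nu>) = (\<Sum>j\<le>M. (\<integral>x. x ^ j \<partial>\<nu>) * (\<integral>x. (1 - x) ^ (M - j) * x \<partial>\<mu>))"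
    and z: "Im z > 0"
  shows "stieltjes \<nu> z * stieltjes \<mu> (1 - z) = 1 / (z * (1 - z))"
proof -
  interpret \<nu>: prob_on_unit_interval \<nu> by (rule \<nu>)
  interpret \<mu>: prob_on_unit_interval \<mu> by (rule \<mu>)
  let ?H = "{z. 0 < Im z}" and ?G = "{z. 0 < Im z \<and> 1 < norm z}"
  have "(stieltjes \<mu> \<circ> (\<lambda>z. 1 - z)) holomorphic_on ?H"
    by (rule holomorphic_on_compose)
      (auto intro!: holomorphic_intros holomorphic_on_subset[OF \<mu>.stieltjes_holomorphic])
  then have "(\<lambda>z. stieltjes \<mu> (1 - z)) holomorphic_on ?H"
    by (simp add: comp_def)
  moreover have "stieltjes \<nu> holomorphic_on ?H"
    by (rule holomorphic_on_subset[OF \<nu>.stieltjes_holomorphic]) auto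
  ultimately have hol: "(\<lambda>z. stieltjes \<nu> z * stieltjes \<mu> (1 - z)) holomorphic_on ?H"
    by (intro holomorphic_on_mult)
  show ?thesis
  proof (rule analytic_continuation_open[where s = ?G and s' = ?H
        and f = "\<lambda>z. stieltjes \<nu> z * stieltjes \<mu> (1 - z)" and g = "\<lambda>z. 1 / (z * (1 - z))"])
    show "open ?G"
      by (intro open_Collect_conj open_halfspace_Im_gt)
        (simp add: open_Collect_less continuous_on_norm continuous_on_const continuous_on_id)
    show "?G \<noteq> {}"
      by (rule ex_in_conv[THEN iffD1], rule exI[of _ "2 * \<i>"]) simp
    show "(\<lambda>z. 1 / (z * (1 - z))) holomorphic_on ?H"
      by (intro holomorphic_intros) auto
    show "stieltjes \<nu> w * stieltjes \<mu> (1 - w) = 1 / (w * (1 - w))" if "w \<in> ?G" for w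
      using that by (intro stieltjes_renewal_identity_outside_unit_disc[OF \<nu> \<mu> moments]) auto
  qed (use z hol in \<open>auto simp: open_halfspace_Im_gt connected_halfspace_Im_gt\<close>)
qed

theorem theorem1:
  fixes \<mu> :: "real measure" and K :: "enat pmf"
  assumes mu_prob: "prob_space \<mu>"
    and mu_sets: "sets \<mu> = sets borel"
    and mu_supp: "emeasure \<mu> {0..1} = 1"
    and K_zero: "pmf K 0 = 0"
    and K_fin: "\<And>n::nat. n \<ge> 1 \<Longrightarrow>
        pmf K (enat n) = integral\<^sup>L \<mu> (\<lambda>x. (1 - x) ^ (n - 1) * x)"
    and K_inf: "pmf K \<infinity> = measure \<mu> {0}"
  shows "\<exists>\<nu> :: real measure. prob_space \<nu> \<and> sets \<nu> = sets borel \<and> emeasure \<nu> {0..1} = 1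
     \<and> (\<forall>z. Im z > 0 \<longrightarrow> stieltjes \<nu> z * stieltjes \<mu> (1 - z) = 1 / (z * (1 - z)))
     \<and> (\<forall>N::nat. renewal_prob K N = integral\<^sup>L \<nu> (\<lambda>x. x ^ N))"
proof -
  have \<mu>: "prob_on_unit_interval \<mu>"
    using mu_prob mu_sets mu_supp by (rule prob_on_unit_interval_intro)
  interpret \<mu>: prob_on_unit_interval \<mu> by (rule \<mu>)
  obtain \<nu> where \<nu>: "real_distribution \<nu>" "emeasure \<nu> {0..1} = 1"
    and moments: "\<And>N. (\<integral>x. x ^ N \<partial>\<nu>) = \<mu>.renewal_seq N"
    using completely_monotone.hausdorff_moment[OF \<mu>.completely_monotone_renewal_seq] by blast
  interpret \<nu>: real_distribution \<nu> by (rule \<nu>(1))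
  have "prob_on_unit_interval \<nu>"
    using \<nu>.prob_space_axioms \<nu>.events_eq_borel \<nu>(2) by (rule prob_on_unit_interval_intro)
  moreover have "(\<integral>x. x ^ Suc M \<partial>\<nu>) = (\<Sum>j\<le>M. (\<integral>x. x ^ j \<partial>\<nu>) * (\<integral>x. (1 - x) ^ (M - j) * x \<partial>\<mu>))" for M
    by (simp only: moments \<mu>.renewal_seq_Suc)
  ultimately have "stieltjes \<nu> z * stieltjes \<mu> (1 - z) = 1 / (z * (1 - z))" if "Im z > 0" for z
    using stieltjes_renewal_identity[OF _ \<mu>] that by blast
  moreover have "renewal_prob K N = (\<integral>x. x ^ N \<partial>\<nu>)" for N
    using \<mu>.renewal_prob_eq_renewal_seq[OF K_zero K_fin] moments by simp
  ultimately show ?thesis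
    using \<nu>.prob_space_axioms \<nu>.events_eq_borel \<nu>(2) by blast
qed

end
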